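(* Let $H = C_5 + C_5 + C_5 + C_5 + C_5 + C_5$ be the Zykov sum of six disjoint $5$-cycles. Let $v\in V(H)$ and let $S$ be the subgraph of $H$ induced by the vertices of the five $5$-cycles not containing $v$. Suppose the edges of $H$ are colored in three colors $1,2,3$ with no monochromatic triangle. Then for each color $i\in\{1,2,3\}$ we have $N_i(v)\cap V(S)\neq\emptyset$, where $N_i(v)$ is the set of vertices $u$ adjacent to $v$ such that the edge $vu$ has color $i$.
   Context: All graphs are finite, undirected, without loops or multiple edges. The Zykov sum $G_1+G_2$ of two vertex-disjoint graphs is obtained by joining every vertex of $G_1$ to every vertex of $G_2$. *)

theory Defs
  imports Main
begin

definition C5_adj :: "nat \<Rightarrow> nat \<Rightarrow> bool" where
  "C5_adj a b \<longleftrightarrow> a < 5 \<and> b < 5 \<and> (b = (a + 1) mod 5 \<or> a = (b + 1) mod 5)"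

text \<open>Vertex (i,a) is vertex a of the i-th copy, i < 6.  Vertices in different copies
  are all joined; inside a copy the C5 adjacency is used.\<close>
definition H_verts :: "(nat \<times> nat) set" where
  "H_verts = {0..<6} \<times> {0..<5}"

definition H_adj :: "nat \<times> nat \<Rightarrow> nat \<times> nat \<Rightarrow> bool" where
  "H_adj x y \<longleftrightarrow> x \<in> H_verts \<and> y \<in> H_verts \<and>
     (fst x \<noteq> fst y \<or> (fst x = fst y \<and> C5_adj (snd x) (snd y)))"

definition S_verts :: "nat \<times> nat \<Rightarrow> (nat \<times> nat) set" where
  "S_verts v = {u \<in> H_verts. fst u \<noteq> fst v}"

definition good_colouring :: "((nat \<times> nat) set \<Rightarrow> nat) \<Rightarrow> bool" where
  "good_colouring c \<longleftrightarrow>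
     (\<forall>x y. H_adj x y \<longrightarrow> c {x, y} \<in> {1, 2, 3}) \<and>
     (\<forall>x y z. H_adj x y \<and> H_adj y z \<and> H_adj x z \<longrightarrow>
        \<not> (c {x, y} = c {y, z} \<and> c {y, z} = c {x, z}))"

definition N_col :: "((nat \<times> nat) set \<Rightarrow> nat) \<Rightarrow> nat \<Rightarrow> nat \<times> nat \<Rightarrow> (nat \<times> nat) set" where
  "N_col c i v = {u. H_adj v u \<and> c {v, u} = i}"

end

theory Submission
  imports Defs
begin

text \<open>Suppose no edge of colour i joins v to S. Then v sends only two colours into S.
  Each 5-cycle of S is odd, so it has an edge whose two endpoints receive the same colour
  from v; by pigeonhole three of the five cycles have such an edge of one common colour b.
  The six endpoints of these three edges span a K6 in H, all joined to v in colour b, so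
  no edge of this K6 has colour b. But a 2-coloured K6 contains a monochromatic triangle.\<close>

lemma remaining_two_colours:
  assumes "i \<in> {1, 2, 3 :: nat}"
  obtains b1 b2 where "\<And>j. j \<in> {1, 2, 3} \<Longrightarrow> j \<noteq> i \<Longrightarrow> j \<in> {b1, b2}"
proof -
  have "\<exists>b1 b2. \<forall>j\<in>{1, 2, 3 :: nat}. j \<noteq> i \<longrightarrow> j \<in> {b1, b2}"
    using assms by (elim insertE) auto
  then show ?thesis using that by blast
qed

lemma two_colour_pigeonhole:
  assumes "2 * k < card A" and "\<forall>x\<in>A. g x \<in> {b1, b2}"
  obtains b T where "b \<in> {b1, b2}" "T \<subseteq> A" "card T = Suc k" "\<forall>x\<in>T. g x = b"
proof -
  have "A = {x\<in>A. g x = b1} \<union> {x\<in>A. g x = b2}" using assms(2) by blast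
  then have "card A \<le> card {x\<in>A. g x = b1} + card {x\<in>A. g x = b2}"
    by (metis card_Un_le)
  then have "Suc k \<le> card {x\<in>A. g x = b1} \<or> Suc k \<le> card {x\<in>A. g x = b2}"
    using assms(1) by linarith
  then obtain b where "b \<in> {b1, b2}" "Suc k \<le> card {x\<in>A. g x = b}"
    by blast
  moreover obtain T where "T \<subseteq> {x\<in>A. g x = b}" "card T = Suc k"
    using obtain_subset_with_card_n[OF calculation(2)] by blast
  ultimately show ?thesis using that by blast
qed

lemma ramsey_3_3:
  fixes f :: "'a set \<Rightarrow> 'b"
  assumes "6 \<le> card X"
    and "\<forall>x\<in>X. \<forall>y\<in>X. x \<noteq> y \<longrightarrow> f {x, y} \<in> {b1, b2}"
  shows "\<exists>x\<in>X. \<exists>y\<in>X. \<exists>z\<in>X. x \<noteq> y \<and> y \<noteq> z \<and> x \<noteq> z \<and>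
           f {x, y} = f {y, z} \<and> f {y, z} = f {x, z}"
proof -
  have "finite X" using assms(1) by (metis card.infinite not_numeral_le_zero)
  obtain x where x: "x \<in> X" using assms(1) by (metis card.empty ex_in_conv not_numeral_le_zero)
  have "card (X - {x}) = card X - 1" using x \<open>finite X\<close> by (simp add: card_Diff_singleton)
  then have "2 * 2 < card (X - {x})" using assms(1) by linarith
  moreover have "\<forall>y\<in>X - {x}. f {x, y} \<in> {b1, b2}" using assms(2) x by auto
  ultimately obtain b T where b: "b \<in> {b1, b2}" and T: "T \<subseteq> X - {x}" "card T = Suc 2"
    and star: "\<forall>y\<in>T. f {x, y} = b"
    by (rule two_colour_pigeonhole)
  have "card T = 3" using T(2) by simp
  then obtain y1 y2 y3 where y: "T = {y1, y2, y3}" "y1 \<noteq> y2" "y2 \<noteq> y3" "y1 \<noteq> y3"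
    by (auto simp: card_3_iff)
  have yX: "y1 \<in> X" "y2 \<in> X" "y3 \<in> X" "x \<noteq> y1" "x \<noteq> y2" "x \<noteq> y3" using T(1) y(1) by auto
  have fx: "f {x, y1} = b" "f {x, y2} = b" "f {x, y3} = b" using star y(1) by auto
  show ?thesis
  proof (cases "f {y1, y2} = b \<or> f {y2, y3} = b \<or> f {y1, y3} = b")
    case True
    then show ?thesis
    proof (elim disjE)
      assume "f {y1, y2} = b"
      then show ?thesis using x yX y fx by (intro bexI[of _ x] bexI[of _ y1] bexI[of _ y2]) simp_all
    next
      assume "f {y2, y3} = b"
      then show ?thesis using x yX y fx by (intro bexI[of _ x] bexI[of _ y2] bexI[of _ y3]) simp_all
    next
      assume "f {y1, y3} = b"
      then show ?thesis using x yX y fx by (intro bexI[of _ x] bexI[of _ y1] bexI[of _ y3]) simp_all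
    qed
  next
    case False
    moreover have "f {y1, y2} \<in> {b1, b2}" "f {y2, y3} \<in> {b1, b2}" "f {y1, y3} \<in> {b1, b2}"
      using assms(2) yX y by auto
    ultimately have "f {y1, y2} = f {y2, y3} \<and> f {y2, y3} = f {y1, y3}"
      using b by auto
    then show ?thesis using yX y by (intro bexI[of _ y1] bexI[of _ y2] bexI[of _ y3]) simp_all
  qed
qed

lemma C5_two_colouring_monochromatic_edge:
  assumes "\<forall>a<5. g a \<in> {b1, b2}"
  shows "\<exists>a<5. g a = g (Suc a mod 5)"
proof (rule ccontr)
  assume "\<not> ?thesis"
  then have proper: "\<forall>a<5. g a \<noteq> g (Suc a mod 5)" by simp
  have n01: "g 0 \<noteq> g 1" and n12: "g 1 \<noteq> g 2" and n23: "g 2 \<noteq> g 3"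
    and n34: "g 3 \<noteq> g 4" and n40: "g 4 \<noteq> g 0"
    using proper[rule_format, of 0] proper[rule_format, of 1] proper[rule_format, of 2]
      proper[rule_format, of 3] proper[rule_format, of 4]
    by (simp_all add: numeral_2_eq_2)
  have "g 0 \<in> {b1, b2}" "g 1 \<in> {b1, b2}" "g 2 \<in> {b1, b2}" "g 3 \<in> {b1, b2}" "g 4 \<in> {b1, b2}"
    using assms by simp_all
  then have "g 2 = g 0" "g 3 = g 1" "g 4 = g 2"
    using n01 n12 n23 n34 by auto
  then show False using n40 by simp
qed

definition H_clique :: "(nat \<times> nat) set \<Rightarrow> bool" where
  "H_clique X \<longleftrightarrow> (\<forall>x\<in>X. \<forall>y\<in>X. x \<noteq> y \<longrightarrow> H_adj x y)"

lemma H_adj_sym: "H_adj x y \<Longrightarrow> H_adj y x"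
  by (auto simp: H_adj_def C5_adj_def)

lemma H_adj_across: "r < 6 \<Longrightarrow> s < 6 \<Longrightarrow> a < 5 \<Longrightarrow> b < 5 \<Longrightarrow> r \<noteq> s \<Longrightarrow> H_adj (r, a) (s, b)"
  by (simp add: H_adj_def H_verts_def)

lemma H_adj_cycle: "r < 6 \<Longrightarrow> a < 5 \<Longrightarrow> H_adj (r, a) (r, Suc a mod 5)"
  by (simp add: H_adj_def H_verts_def C5_adj_def)

lemma H_adj_S_verts: "v \<in> H_verts \<Longrightarrow> u \<in> S_verts v \<Longrightarrow> H_adj v u"
  by (simp add: H_adj_def S_verts_def)

definition chosen_cycle_edges :: "nat set \<Rightarrow> (nat \<Rightarrow> nat) \<Rightarrow> (nat \<times> nat) set" where
  "chosen_cycle_edges T e = (\<Union>r\<in>T. {(r, e r), (r, Suc (e r) mod 5)})"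

lemma mem_chosen_cycle_edges:
  "x \<in> chosen_cycle_edges T e \<longleftrightarrow>
     fst x \<in> T \<and> (snd x = e (fst x) \<or> snd x = Suc (e (fst x)) mod 5)"
  by (cases x) (auto simp: chosen_cycle_edges_def)

lemma card_chosen_cycle_edges:
  assumes "finite T" and "\<forall>r\<in>T. e r < 5"
  shows "card (chosen_cycle_edges T e) = 2 * card T"
proof -
  have "card {(r, e r), (r, Suc (e r) mod 5)} = 2" if "r \<in> T" for r
  proof -
    have "Suc (e r) mod 5 \<noteq> e r" using assms(2) that by (cases "e r = 4") auto
    then show ?thesis by simp
  qed
  then have "card (chosen_cycle_edges T e) = (\<Sum>r\<in>T. 2)"
    unfolding chosen_cycle_edges_def using assms(1) by (subst card_UN_disjoint) auto
  then show ?thesis by simp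
qed

lemma H_clique_chosen_cycle_edges:
  assumes "T \<subseteq> {0..<6}" and "\<forall>r\<in>T. e r < 5"
  shows "H_clique (chosen_cycle_edges T e)"
  unfolding H_clique_def
proof (intro ballI impI)
  fix x y assume xy: "x \<in> chosen_cycle_edges T e" "y \<in> chosen_cycle_edges T e" "x \<noteq> y"
  obtain r a s b where x: "x = (r, a)" and y: "y = (s, b)" by fastforce
  have rs: "r \<in> T" "s \<in> T" "(a = e r \<or> a = Suc (e r) mod 5)" "(b = e s \<or> b = Suc (e s) mod 5)"
    using xy(1,2) x y by (auto simp: mem_chosen_cycle_edges)
  then have bounds: "r < 6" "s < 6" "a < 5" "b < 5" using assms by auto
  show "H_adj x y"
  proof (cases "r = s")
    case True
    then have "(a = e r \<and> b = Suc (e r) mod 5) \<or> (b = e r \<and> a = Suc (e r) mod 5)"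
      using xy(3) rs x y by auto
    then show ?thesis
      using x y True bounds rs assms(2) by (auto intro: H_adj_cycle H_adj_sym)
  next
    case False
    then show ?thesis using x y bounds by (simp add: H_adj_across)
  qed
qed

lemma two_coloured_S_has_monochromatic_K6:
  assumes "v \<in> H_verts" and "\<forall>u\<in>S_verts v. g u \<in> {b1, b2}"
  obtains X b where "X \<subseteq> S_verts v" "card X = 6" "H_clique X" "\<forall>x\<in>X. g x = b"
proof -
  define R where "R = {0..<6} - {fst v}"
  have "card R = 5" using assms(1) by (auto simp: R_def H_verts_def)
  have S: "(r, a) \<in> S_verts v \<longleftrightarrow> r \<in> R \<and> a < 5" for r a
    using assms(1) by (auto simp: S_verts_def H_verts_def R_def)
  have "\<exists>a<5. g (r, a) = g (r, Suc a mod 5)" if "r \<in> R" for r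
  proof (rule C5_two_colouring_monochromatic_edge)
    show "\<forall>a<5. g (r, a) \<in> {b1, b2}" using assms(2) S that by blast
  qed
  then obtain e where e: "\<And>r. r \<in> R \<Longrightarrow> e r < 5 \<and> g (r, e r) = g (r, Suc (e r) mod 5)"
    by metis
  have "2 * 2 < card R" using \<open>card R = 5\<close> by simp
  moreover have "\<forall>r\<in>R. g (r, e r) \<in> {b1, b2}" using assms(2) S e by blast
  ultimately obtain b T where T: "T \<subseteq> R" "card T = Suc 2" and Tb: "\<forall>r\<in>T. g (r, e r) = b"
    by (rule two_colour_pigeonhole)
  have chosen: "r \<in> R" "e r < 5" "g (r, e r) = b" "g (r, Suc (e r) mod 5) = b" if "r \<in> T" for r
    using subsetD[OF T(1) that] e[of r] Tb that by auto
  define X where "X = chosen_cycle_edges T e"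
  have eT: "\<forall>r\<in>T. e r < 5" using chosen by blast
  have "finite T" using T(2) by (intro card_ge_0_finite) simp
  then have "card X = 6" using card_chosen_cycle_edges[OF _ eT] T(2) by (simp add: X_def)
  moreover have "H_clique X"
    unfolding X_def using T(1) eT by (intro H_clique_chosen_cycle_edges) (auto simp: R_def)
  moreover have "X \<subseteq> S_verts v" "\<forall>x\<in>X. g x = b"
    using chosen S by (auto simp: X_def mem_chosen_cycle_edges)
  ultimately show ?thesis using that by blast
qed

lemma no_monochromatic_star_onto_K6:
  assumes "good_colouring c" and "H_clique X" and "6 \<le> card X"
    and star: "\<forall>x\<in>X. H_adj v x \<and> c {v, x} = b"
  shows False
proof -
  have range: "\<And>x y. H_adj x y \<Longrightarrow> c {x, y} \<in> {1, 2, 3}"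
    and no_triangle: "\<And>x y z. H_adj x y \<Longrightarrow> H_adj y z \<Longrightarrow> H_adj x z \<Longrightarrow>
        \<not> (c {x, y} = c {y, z} \<and> c {y, z} = c {x, z})"
    using assms(1) unfolding good_colouring_def by blast+
  obtain x where "x \<in> X" using assms(3) by (metis card.empty ex_in_conv not_numeral_le_zero)
  then have "b \<in> {1, 2, 3}" using star range by metis
  then obtain d1 d2 where others: "\<And>j. j \<in> {1, 2, 3} \<Longrightarrow> j \<noteq> b \<Longrightarrow> j \<in> {d1, d2}"
    using remaining_two_colours by blast
  have "\<forall>x\<in>X. \<forall>y\<in>X. x \<noteq> y \<longrightarrow> c {x, y} \<in> {d1, d2}"
  proof (intro ballI impI)
    fix x y assume xy: "x \<in> X" "y \<in> X" "x \<noteq> y"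
    have "H_adj x y" using assms(2) xy unfolding H_clique_def by blast
    moreover have "H_adj v x" "H_adj v y" "c {v, x} = b" "c {v, y} = b" using star xy by auto
    ultimately have "c {x, y} \<noteq> b" using no_triangle[of v x y] by simp
    then show "c {x, y} \<in> {d1, d2}" using range[OF \<open>H_adj x y\<close>] others by blast
  qed
  from ramsey_3_3[OF assms(3) this] obtain x y z where "x \<in> X" "y \<in> X" "z \<in> X"
      "x \<noteq> y" "y \<noteq> z" "x \<noteq> z" "c {x, y} = c {y, z} \<and> c {y, z} = c {x, z}"
    by blast
  moreover from this have "H_adj x y" "H_adj y z" "H_adj x z"
    using assms(2) unfolding H_clique_def by blast+
  ultimately show False using no_triangle by blast
qed

theorem lemma4:
  fixes c :: "(nat \<times> nat) set \<Rightarrow> nat" and v :: "nat \<times> nat" and i :: nat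
  assumes "good_colouring c"
    and "v \<in> H_verts"
    and "i \<in> {1, 2, 3}"
  shows "N_col c i v \<inter> S_verts v \<noteq> {}"
proof
  assume no_i_edge: "N_col c i v \<inter> S_verts v = {}"
  obtain b1 b2 where others: "\<And>j. j \<in> {1, 2, 3} \<Longrightarrow> j \<noteq> i \<Longrightarrow> j \<in> {b1, b2}"
    using remaining_two_colours[OF assms(3)] by blast
  have colours: "\<forall>u\<in>S_verts v. c {v, u} \<in> {b1, b2}"
  proof
    fix u assume u: "u \<in> S_verts v"
    have "H_adj v u" using assms(2) u by (rule H_adj_S_verts)
    then have "c {v, u} \<in> {1, 2, 3}" using assms(1) unfolding good_colouring_def by blast
    moreover have "c {v, u} \<noteq> i" using no_i_edge u \<open>H_adj v u\<close> by (auto simp: N_col_def)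
    ultimately show "c {v, u} \<in> {b1, b2}" using others by blast
  qed
  obtain X b where X: "X \<subseteq> S_verts v" "card X = 6" "H_clique X"
    and mono: "\<forall>x\<in>X. c {v, x} = b"
    by (rule two_coloured_S_has_monochromatic_K6[OF assms(2) colours])
  have "\<forall>x\<in>X. H_adj v x \<and> c {v, x} = b"
    using X(1) mono H_adj_S_verts[OF assms(2)] by blast
  then show False
    using no_monochromatic_star_onto_K6[OF assms(1) X(3)] X(2) by simp
qed

end
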